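(* Let $\mathcal{V}$ be a real vector space of dimension $d$, let $\tau\in\vee^2\mathcal{V}^*$ have rank $p+1$ and Lorentzian signature, and let $\gamma$ be a positive-definite metric on $\mathrm{Ker}(\tau)=\{v\in\mathcal{V}:\tau(v,\cdot)=0\}$. Let $f_p(\mathcal{V},\tau,\gamma)$ be the set of frames $(\tau_A,e_i)$ of $\mathcal{V}$ ($A=0,\dots,p$, $i=1,\dots,d-p-1$) with $e_i\in\mathrm{Ker}(\tau)$, $\tau(\tau_A,\tau_B)=\eta_{AB}$ and $\gamma(e_i,e_j)=\delta_{ij}$. Then the formula $$(\tau_A,e_i)\cdot g=\big({\Lambda^A}_B\tau_A+{v^i}_Be_i,\ {R^i}_je_i\big),\qquad g=\begin{pmatrix}{\Lambda^A}_B&0\\ {v^i}_B&{R^i}_j\end{pmatrix}\in G_p,$$ defines a right action of $G_p$ on $f_p(\mathcal{V},\tau,\gamma)$ which is free and transitive, i.e.\ $f_p(\mathcal{V},\tau,\gamma)$ is a $G_p$-torsor.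
   Context: $\eta_{AB}=\mathrm{diag}(-1,1,\dots,1)$ is the Lorentz metric in $p+1$ dimensions. $G_p$ is the group of $d\times d$ real block matrices $\begin{pmatrix}\Lambda&0\\ v&R\end{pmatrix}$ with $\Lambda\in O(1,p)$, $R\in O(d-p-1)$ and $v$ an arbitrary real $(d-p-1)\times(p+1)$ matrix. *)

theory Defs
  imports "HOL-Analysis.Analysis" "Jordan_Normal_Form.Matrix"
begin

text \<open>The real vector space V is modelled by a finite-dimensional type 'v
 (class euclidean_space; its inner product plays no role), d = DIM('v).\<close>

definition sym_bilinear :: "('v::real_vector \<Rightarrow> 'v \<Rightarrow> real) \<Rightarrow> bool" where
  "sym_bilinear \<tau> \<longleftrightarrow> bilinear \<tau> \<and> (\<forall>x y. \<tau> x y = \<tau> y x)"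

definition kerf :: "('v::real_vector \<Rightarrow> 'v \<Rightarrow> real) \<Rightarrow> 'v set" where
  "kerf \<tau> = {v. \<forall>w. \<tau> v w = 0}"

definition form_rank :: "('v::euclidean_space \<Rightarrow> 'v \<Rightarrow> real) \<Rightarrow> nat" where
  "form_rank \<tau> = DIM('v) - dim (kerf \<tau>)"

definition pos_index :: "('v::euclidean_space \<Rightarrow> 'v \<Rightarrow> real) \<Rightarrow> nat" where
  "pos_index \<tau> = Max {dim S | S. subspace S \<and> (\<forall>x\<in>S. x \<noteq> 0 \<longrightarrow> \<tau> x x > 0)}"

definition neg_index :: "('v::euclidean_space \<Rightarrow> 'v \<Rightarrow> real) \<Rightarrow> nat" where
  "neg_index \<tau> = Max {dim S | S. subspace S \<and> (\<forall>x\<in>S. x \<noteq> 0 \<longrightarrow> \<tau> x x < 0)}"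

definition lorentzian_sig :: "('v::euclidean_space \<Rightarrow> 'v \<Rightarrow> real) \<Rightarrow> nat \<Rightarrow> bool" where
  "lorentzian_sig \<tau> p \<longleftrightarrow> neg_index \<tau> = 1 \<and> pos_index \<tau> = p"

definition pos_def_metric_on :: "'v::real_vector set \<Rightarrow> ('v \<Rightarrow> 'v \<Rightarrow> real) \<Rightarrow> bool" where
  "pos_def_metric_on K \<gamma> \<longleftrightarrow>
     (\<forall>x\<in>K. \<forall>y\<in>K. \<gamma> x y = \<gamma> y x) \<and>
     (\<forall>x\<in>K. \<forall>y\<in>K. \<forall>z\<in>K. \<forall>a b. \<gamma> (a *\<^sub>R x + b *\<^sub>R y) z = a * \<gamma> x z + b * \<gamma> y z) \<and>
     (\<forall>x\<in>K. x \<noteq> 0 \<longrightarrow> \<gamma> x x > 0)"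

definition eta :: "nat \<Rightarrow> nat \<Rightarrow> real" where
  "eta A B = (if A = B then (if A = 0 then -1 else 1) else 0)"

definition eta_mat :: "nat \<Rightarrow> real mat" where
  "eta_mat p = mat (p+1) (p+1) (\<lambda>(A,B). eta A B)"

definition lorentz_group :: "nat \<Rightarrow> real mat set" where
  "lorentz_group p = {L. L \<in> carrier_mat (p+1) (p+1) \<and> transpose_mat L * eta_mat p * L = eta_mat p}"

definition orth_group :: "nat \<Rightarrow> real mat set" where
  "orth_group m = {R. R \<in> carrier_mat m m \<and> transpose_mat R * R = 1\<^sub>m m}"

text \<open>The group G_p of d x d block matrices (Lambda 0; v R).\<close>
definition Gp :: "nat \<Rightarrow> nat \<Rightarrow> real mat set" where
  "Gp d p = {g. g \<in> carrier_mat d d \<and> p + 1 \<le> d \<and>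
     (\<forall>A<p+1. \<forall>j<d-(p+1). g $$ (A, p+1+j) = 0) \<and>
     mat (p+1) (p+1) (\<lambda>(A,B). g $$ (A,B)) \<in> lorentz_group p \<and>
     mat (d-(p+1)) (d-(p+1)) (\<lambda>(i,j). g $$ (p+1+i, p+1+j)) \<in> orth_group (d-(p+1))}"

definition frames_p :: "nat \<Rightarrow> ('v::euclidean_space \<Rightarrow> 'v \<Rightarrow> real) \<Rightarrow> ('v \<Rightarrow> 'v \<Rightarrow> real)
     \<Rightarrow> ('v list \<times> 'v list) set" where
  "frames_p p \<tau> \<gamma> = {(Ts, Es).
     length Ts = p + 1 \<and> length Es = DIM('v) - (p+1) \<and>
     distinct (Ts @ Es) \<and> independent (set (Ts @ Es)) \<and> span (set (Ts @ Es)) = UNIV \<and>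
     (\<forall>i<length Es. Es ! i \<in> kerf \<tau>) \<and>
     (\<forall>A<p+1. \<forall>B<p+1. \<tau> (Ts ! A) (Ts ! B) = eta A B) \<and>
     (\<forall>i<length Es. \<forall>j<length Es. \<gamma> (Es ! i) (Es ! j) = (if i = j then 1 else 0))}"

text \<open>The right action:
 (tau_A, e_i) . g = (Lambda^A_B tau_A + v^i_B e_i, R^i_j e_i),
 where Lambda^A_B = g(A,B), v^i_B = g(p+1+i,B), R^i_j = g(p+1+i,p+1+j).\<close>
definition frame_act :: "nat \<Rightarrow> 'v::real_vector list \<times> 'v list \<Rightarrow> real mat \<Rightarrow> 'v list \<times> 'v list" where
  "frame_act p F g = (case F of (Ts, Es) \<Rightarrow>
     (map (\<lambda>B. (\<Sum>A<p+1. g $$ (A, B) *\<^sub>R Ts ! A) + (\<Sum>i<length Es. g $$ (p+1+i, B) *\<^sub>R Es ! i)) [0..<p+1],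
      map (\<lambda>j. \<Sum>i<length Es. g $$ (p+1+i, p+1+j) *\<^sub>R Es ! i) [0..<length Es]))"

end

theory Submission
  imports Defs
begin

text \<open>Writing a frame as the row (\<tau>_A, e_i) of basis vectors, the action is right
multiplication by g. Since the e_i span Ker \<tau> and the \<tau>_A are \<tau>-orthonormal, the \<tau>-Gram
matrix of the new \<tau>-part is \<Lambda>^T \<eta> \<Lambda> and the \<gamma>-Gram matrix of the new e-part is R^T R;
the new e-part lies in Ker \<tau> exactly when the upper right block of g vanishes. Hence g maps
an adapted frame to an adapted frame iff g \<in> G_p. Freeness is linear independence of a frame,
and transitivity comes from expanding one frame in another.

An adapted frame exists by Gram-Schmidt: for \<gamma> on Ker \<tau> directly, and for \<tau> by repeatedly
choosing a non-null vector \<tau>-orthogonal to the vectors chosen so far, starting from a timelike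
one. Such a vector exists while fewer than rank \<tau> vectors are chosen, and the Lorentzian
signature forces all later choices to be spacelike.\<close>

section \<open>Frames as rows of vectors\<close>

lemma sum_lessThan_add: "(\<Sum>m<a + b. f m) = (\<Sum>m<a. f m) + (\<Sum>i<b. f (a + i))"
  for a b :: nat
  by (induction b) (auto simp: add.assoc)

lemma sum_set_distinct: "distinct xs \<Longrightarrow> (\<Sum>x\<in>set xs. f x) = (\<Sum>k<length xs. f (xs ! k))"
proof -
  assume "distinct xs"
  then have "bij_betw ((!) xs) {..<length xs} (set xs)"
    by (auto simp: bij_betw_def inj_on_nth in_set_conv_nth)
  then show ?thesis
    by (simp add: sum.reindex_bij_betw)
qed

definition lin_indep_list :: "'v::real_vector list \<Rightarrow> bool" where
  "lin_indep_list xs \<longleftrightarrow> (\<forall>c. (\<Sum>k<length xs. c k *\<^sub>R xs ! k) = 0 \<longrightarrow> (\<forall>k<length xs. c k = 0))"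

lemma lin_indep_list_distinct:
  assumes "lin_indep_list xs"
  shows "distinct xs"
proof (subst distinct_conv_nth, intro allI impI notI)
  fix i j assume ij: "i < length xs" "j < length xs" "i \<noteq> j" and eq: "xs ! i = xs ! j"
  define c where "c k = (if k = i then 1 else if k = j then -1 else 0 :: real)" for k
  have "(\<Sum>k<length xs. c k *\<^sub>R xs ! k)
      = (\<Sum>k<length xs. (if k = i then xs ! i else 0) - (if k = j then xs ! j else 0))"
    by (rule sum.cong) (auto simp: c_def ij)
  also have "\<dots> = 0"
    using ij eq by (simp add: sum_subtractf)
  finally have "c i = 0"
    using assms ij unfolding lin_indep_list_def by blast
  then show False
    by (simp add: c_def)
qed

lemma lin_indep_list_independent:
  assumes "lin_indep_list xs"
  shows "independent (set xs)"
proof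
  assume "dependent (set xs)"
  then obtain u where u: "\<exists>v\<in>set xs. u v \<noteq> 0" "(\<Sum>v\<in>set xs. u v *\<^sub>R v) = 0"
    using dependent_finite by blast
  have "(\<Sum>k<length xs. u (xs ! k) *\<^sub>R xs ! k) = 0"
    using u(2) sum_set_distinct[OF lin_indep_list_distinct[OF assms], of "\<lambda>v. u v *\<^sub>R v"]
    by simp
  then have "\<forall>k<length xs. u (xs ! k) = 0"
    using assms[unfolded lin_indep_list_def, rule_format, of "\<lambda>k. u (xs ! k)"] by blast
  then show False
    using u(1) by (auto simp: in_set_conv_nth)
qed

lemma span_set_distinct_list:
  assumes "distinct xs" "y \<in> span (set xs)"
  obtains c where "y = (\<Sum>k<length xs. c k *\<^sub>R xs ! k)"
proof -
  obtain u where "y = (\<Sum>v\<in>set xs. u v *\<^sub>R v)"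
    using assms(2) span_finite[of "set xs"] by auto
  then have "y = (\<Sum>k<length xs. u (xs ! k) *\<^sub>R xs ! k)"
    using sum_set_distinct[OF assms(1), of "\<lambda>v. u v *\<^sub>R v"] by simp
  then show thesis
    by (rule that)
qed

lemma lin_indep_list_span_UNIV:
  fixes xs :: "'v::euclidean_space list"
  assumes "lin_indep_list xs" "length xs = DIM('v)"
  shows "span (set xs) = UNIV"
proof -
  have "card (set xs) = dim (UNIV :: 'v set)"
    using assms lin_indep_list_distinct[OF assms(1)] by (simp add: distinct_card)
  then show ?thesis
    using card_eq_dim[OF subset_UNIV] lin_indep_list_independent[OF assms(1)] by auto
qed

definition frame_mult :: "'v::real_vector list \<Rightarrow> real mat \<Rightarrow> 'v list" where
  "frame_mult xs g = map (\<lambda>k. \<Sum>m<length xs. g $$ (m, k) *\<^sub>R xs ! m) [0..<length xs]"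

lemma length_frame_mult [simp]: "length (frame_mult xs g) = length xs"
  by (simp add: frame_mult_def)

lemma nth_frame_mult [simp]:
  "k < length xs \<Longrightarrow> frame_mult xs g ! k = (\<Sum>m<length xs. g $$ (m, k) *\<^sub>R xs ! m)"
  by (simp add: frame_mult_def)

lemma nth_frame_mult_append:
  assumes "length Ts = n" "k < n + length Es"
  shows "frame_mult (Ts @ Es) g ! k
    = (\<Sum>A<n. g $$ (A, k) *\<^sub>R Ts ! A) + (\<Sum>i<length Es. g $$ (n + i, k) *\<^sub>R Es ! i)"
  using assms by (simp add: sum_lessThan_add nth_append)

lemma frame_mult_one [simp]: "frame_mult xs (1\<^sub>m (length xs)) = xs"
proof (rule nth_equalityI)
  fix k assume "k < length (frame_mult xs (1\<^sub>m (length xs)))"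
  then have k: "k < length xs" by simp
  have "(\<Sum>m<length xs. 1\<^sub>m (length xs) $$ (m, k) *\<^sub>R xs ! m) = (\<Sum>m<length xs. if m = k then xs ! k else 0)"
    using k by (intro sum.cong) auto
  then show "frame_mult xs (1\<^sub>m (length xs)) ! k = xs ! k"
    using k by simp
qed simp

lemma frame_mult_mult:
  assumes g: "g \<in> carrier_mat n n" and h: "h \<in> carrier_mat n n" and xs: "length xs = n"
  shows "frame_mult (frame_mult xs g) h = frame_mult xs (g * h)"
proof (rule nth_equalityI)
  fix l assume "l < length (frame_mult (frame_mult xs g) h)"
  then have l: "l < n" using xs by simp
  have "frame_mult (frame_mult xs g) h ! l = (\<Sum>k<n. h $$ (k, l) *\<^sub>R (\<Sum>m<n. g $$ (m, k) *\<^sub>R xs ! m))"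
    using l xs by simp
  also have "\<dots> = (\<Sum>m<n. \<Sum>k<n. (g $$ (m, k) * h $$ (k, l)) *\<^sub>R xs ! m)"
    by (subst sum.swap) (simp add: scaleR_sum_right mult.commute)
  also have "\<dots> = (\<Sum>m<n. (g * h) $$ (m, l) *\<^sub>R xs ! m)"
    using g h l by (intro sum.cong) (simp_all add: scalar_prod_def atLeast0LessThan scaleR_sum_left)
  also have "\<dots> = frame_mult xs (g * h) ! l"
    using l xs by simp
  finally show "frame_mult (frame_mult xs g) h ! l = frame_mult xs (g * h) ! l" .
qed (simp add: xs)

lemma frame_mult_eq_self_imp_one:
  assumes indep: "lin_indep_list xs" and g: "g \<in> carrier_mat (length xs) (length xs)"
    and fix_xs: "frame_mult xs g = xs"
  shows "g = 1\<^sub>m (length xs)"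
proof (rule eq_matI)
  fix m k assume "m < dim_row (1\<^sub>m (length xs))" "k < dim_col (1\<^sub>m (length xs) :: real mat)"
  then have mk: "m < length xs" "k < length xs" by auto
  define c where "c i = g $$ (i, k) - (if i = k then 1 else 0)" for i
  have "(\<Sum>i<length xs. c i *\<^sub>R xs ! i)
      = frame_mult xs g ! k - (\<Sum>i<length xs. if i = k then xs ! k else 0)"
    unfolding nth_frame_mult[OF mk(2)] sum_subtractf[symmetric]
    by (intro sum.cong) (auto simp: c_def scaleR_diff_left)
  also have "\<dots> = 0"
    using mk fix_xs by simp
  finally have "c m = 0"
    using indep mk unfolding lin_indep_list_def by blast
  then show "g $$ (m, k) = 1\<^sub>m (length xs) $$ (m, k)"
    using mk by (simp add: c_def)
qed (use g in auto)

lemma frame_mult_surj: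
  assumes "distinct xs" "span (set xs) = UNIV" "length ys = length xs"
  obtains g where "g \<in> carrier_mat (length xs) (length xs)" "frame_mult xs g = ys"
proof -
  have "\<forall>k. \<exists>c. ys ! k = (\<Sum>m<length xs. c m *\<^sub>R xs ! m)"
    using span_set_distinct_list[OF assms(1)] assms(2) by (metis UNIV_I)
  then obtain c where c: "\<And>k. ys ! k = (\<Sum>m<length xs. c k m *\<^sub>R xs ! m)"
    by metis
  define g where "g = mat (length xs) (length xs) (\<lambda>(m, k). c k m)"
  have "frame_mult xs g = ys"
    by (rule nth_equalityI) (auto simp: assms(3) g_def c intro: sum.cong)
  then show thesis
    by (intro that) (simp_all add: g_def)
qed

section \<open>The group G_p\<close>

definition block_lower_triangular :: "nat \<Rightarrow> nat \<Rightarrow> real mat \<Rightarrow> bool" where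
  "block_lower_triangular d p g \<longleftrightarrow> (\<forall>A<p+1. \<forall>j<d-(p+1). g $$ (A, p+1+j) = 0)"

lemma block_lower_triangular_one: "block_lower_triangular d p (1\<^sub>m d)"
  by (simp add: block_lower_triangular_def)

lemma block_lower_triangular_mult:
  assumes "g \<in> carrier_mat d d" "h \<in> carrier_mat d d"
    and "block_lower_triangular d p g" "block_lower_triangular d p h"
  shows "block_lower_triangular d p (g * h)"
  unfolding block_lower_triangular_def
proof (intro allI impI)
  fix A j assume Aj: "A < p+1" "j < d-(p+1)"
  have "g $$ (A, k) * h $$ (k, p+1+j) = 0" if "k < d" for k
  proof (cases "k < p+1")
    case True
    then show ?thesis
      using assms(4) Aj unfolding block_lower_triangular_def by simp
  next
    case False
    then have "k = p+1+(k-(p+1))" "k-(p+1) < d-(p+1)"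
      using \<open>k < d\<close> by auto
    then have "g $$ (A, k) = 0"
      using assms(3) Aj unfolding block_lower_triangular_def by metis
    then show ?thesis
      by simp
  qed
  then have "(\<Sum>k<d. g $$ (A, k) * h $$ (k, p+1+j)) = 0"
    by (intro sum.neutral) auto
  then show "(g * h) $$ (A, p+1+j) = 0"
    using assms(1,2) Aj by (simp add: scalar_prod_def atLeast0LessThan)
qed

lemma nth_frame_mult_lower:
  assumes Ts: "length Ts = p+1" and g: "block_lower_triangular (length (Ts @ Es)) p g"
    and j: "j < length Es"
  shows "frame_mult (Ts @ Es) g ! (p+1+j) = (\<Sum>i<length Es. g $$ (p+1+i, p+1+j) *\<^sub>R Es ! i)"
proof -
  have "(\<Sum>A<p+1. g $$ (A, p+1+j) *\<^sub>R Ts ! A) = 0"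
    using g j Ts unfolding block_lower_triangular_def by (intro sum.neutral) auto
  then show ?thesis
    using nth_frame_mult_append[OF Ts, of "p+1+j"] j by simp
qed

lemma frame_act_eq_take_drop:
  assumes Ts: "length Ts = p+1" and g: "block_lower_triangular (length (Ts @ Es)) p g"
  shows "frame_act p (Ts, Es) g
    = (take (p+1) (frame_mult (Ts @ Es) g), drop (p+1) (frame_mult (Ts @ Es) g))"
proof -
  let ?ys = "frame_mult (Ts @ Es) g"
  have "map (\<lambda>j. \<Sum>i<length Es. g $$ (p+1+i, p+1+j) *\<^sub>R Es ! i) [0..<length Es]
      = drop (p+1) ?ys"
    using Ts nth_frame_mult_lower[OF Ts g] by (intro nth_equalityI) (simp_all del: upt_Suc)
  moreover have "map (\<lambda>B. (\<Sum>A<p+1. g $$ (A, B) *\<^sub>R Ts ! A)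
        + (\<Sum>i<length Es. g $$ (p+1+i, B) *\<^sub>R Es ! i)) [0..<p+1]
      = take (p+1) ?ys"
    using Ts nth_frame_mult_append[OF Ts]
    by (intro nth_equalityI) (simp_all del: upt_Suc sum.lessThan_Suc)
  ultimately show ?thesis
    by (simp add: frame_act_def del: upt_Suc)
qed

lemma mat_in_lorentz_group_iff:
  "mat (p+1) (p+1) f \<in> lorentz_group p \<longleftrightarrow>
    (\<forall>B<p+1. \<forall>C<p+1. (\<Sum>A<p+1. f (A, B) * f (A, C) * eta A A) = eta B C)"
proof -
  let ?L = "mat (p+1) (p+1) f"
  have "(\<Sum>A<p+1. f (A, B) * eta A k) = f (k, B) * eta k k" if "k < p+1" for B k
    using that by (simp add: eta_def if_distrib cong: if_cong)
  then have entry: "(transpose_mat ?L * eta_mat p * ?L) $$ (B, C) = (\<Sum>A<p+1. f (A, B) * f (A, C) * eta A A)"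
    if "B < p+1" "C < p+1" for B C
    using that by (simp add: eta_mat_def scalar_prod_def atLeast0LessThan mult.commute mult.left_commute)
  show ?thesis
  proof
    assume "?L \<in> lorentz_group p"
    then have "(transpose_mat ?L * eta_mat p * ?L) $$ (B, C) = eta_mat p $$ (B, C)" for B C
      by (simp add: lorentz_group_def)
    then show "\<forall>B<p+1. \<forall>C<p+1. (\<Sum>A<p+1. f (A, B) * f (A, C) * eta A A) = eta B C"
      using entry by (simp add: eta_mat_def del: sum.lessThan_Suc)
  next
    assume gram: "\<forall>B<p+1. \<forall>C<p+1. (\<Sum>A<p+1. f (A, B) * f (A, C) * eta A A) = eta B C"
    have "transpose_mat ?L * eta_mat p * ?L = eta_mat p"
    proof (rule eq_matI)
      fix B C assume "B < dim_row (eta_mat p)" "C < dim_col (eta_mat p)"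
      then show "(transpose_mat ?L * eta_mat p * ?L) $$ (B, C) = eta_mat p $$ (B, C)"
        using entry gram by (simp add: eta_mat_def del: sum.lessThan_Suc)
    qed (simp_all add: eta_mat_def)
    then show "?L \<in> lorentz_group p"
      by (simp add: lorentz_group_def)
  qed
qed

lemma mat_in_orth_group_iff:
  "mat m m f \<in> orth_group m \<longleftrightarrow>
    (\<forall>j<m. \<forall>l<m. (\<Sum>i<m. f (i, j) * f (i, l)) = (if j = l then 1 else 0))"
proof -
  let ?R = "mat m m f"
  have entry: "(transpose_mat ?R * ?R) $$ (j, l) = (\<Sum>i<m. f (i, j) * f (i, l))"
    if "j < m" "l < m" for j l
    using that by (simp add: scalar_prod_def atLeast0LessThan)
  show ?thesis
  proof
    assume "?R \<in> orth_group m"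
    then have "(transpose_mat ?R * ?R) $$ (j, l) = 1\<^sub>m m $$ (j, l)" for j l
      by (simp add: orth_group_def)
    then show "\<forall>j<m. \<forall>l<m. (\<Sum>i<m. f (i, j) * f (i, l)) = (if j = l then 1 else 0)"
      using entry by simp
  next
    assume "\<forall>j<m. \<forall>l<m. (\<Sum>i<m. f (i, j) * f (i, l)) = (if j = l then 1 else 0)"
    then have "transpose_mat ?R * ?R = 1\<^sub>m m"
      using entry by (intro eq_matI) auto
    then show "?R \<in> orth_group m"
      by (simp add: orth_group_def)
  qed
qed

lemma mem_Gp_iff:
  "g \<in> Gp d p \<longleftrightarrow> g \<in> carrier_mat d d \<and> p+1 \<le> d \<and> block_lower_triangular d p g \<and>
    (\<forall>B<p+1. \<forall>C<p+1. (\<Sum>A<p+1. g $$ (A, B) * g $$ (A, C) * eta A A) = eta B C) \<and>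
    (\<forall>j<d-(p+1). \<forall>l<d-(p+1).
      (\<Sum>i<d-(p+1). g $$ (p+1+i, p+1+j) * g $$ (p+1+i, p+1+l)) = (if j = l then 1 else 0))"
  unfolding Gp_def block_lower_triangular_def mat_in_lorentz_group_iff mat_in_orth_group_iff
  by auto

section \<open>Symmetric bilinear forms\<close>

lemma dim_Un_set_le: "dim (S \<union> set ts) \<le> dim S + length ts"
  for S :: "'v::euclidean_space set"
proof (induction ts)
  case (Cons t ts)
  have "dim (S \<union> set (t # ts)) \<le> dim (S \<union> set ts) + 1"
    using dim_insert[of t "S \<union> set ts"] by simp
  then show ?case
    using Cons by simp
qed simp

definition pseudo_orthonormal :: "('v \<Rightarrow> 'v \<Rightarrow> real) \<Rightarrow> 'v list \<Rightarrow> bool" where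
  "pseudo_orthonormal \<tau> ts \<longleftrightarrow>
    (\<forall>i<length ts. \<forall>j<length ts. i \<noteq> j \<longrightarrow> \<tau> (ts ! i) (ts ! j) = 0) \<and>
    (\<forall>i<length ts. \<bar>\<tau> (ts ! i) (ts ! i)\<bar> = 1)"

lemma pseudo_orthonormal_snoc:
  assumes "pseudo_orthonormal \<tau> ts" "\<forall>s\<in>set ts. \<tau> s t = 0 \<and> \<tau> t s = 0" "\<bar>\<tau> t t\<bar> = 1"
  shows "pseudo_orthonormal \<tau> (ts @ [t])"
  using assms unfolding pseudo_orthonormal_def
  by (auto simp: nth_append less_Suc_eq)

lemma neg_index_ge:
  fixes \<tau> :: "'v::euclidean_space \<Rightarrow> 'v \<Rightarrow> real"
  assumes "subspace S" "\<forall>x\<in>S. x \<noteq> 0 \<longrightarrow> \<tau> x x < 0"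
  shows "dim S \<le> neg_index \<tau>"
proof -
  let ?N = "{dim S | S. subspace S \<and> (\<forall>x\<in>S. x \<noteq> 0 \<longrightarrow> \<tau> x x < 0)}"
  have "?N \<subseteq> {..DIM('v)}"
    using dim_subset_UNIV by auto
  then have "finite ?N"
    by (rule finite_subset) simp
  then show ?thesis
    unfolding neg_index_def using assms by (intro Max_ge) auto
qed

lemma ex_timelike_if_neg_index_pos:
  fixes \<tau> :: "'v::euclidean_space \<Rightarrow> 'v \<Rightarrow> real"
  assumes "0 < neg_index \<tau>"
  shows "\<exists>x. \<tau> x x < 0"
proof (rule ccontr)
  let ?N = "{dim S | S. subspace S \<and> (\<forall>x\<in>S. x \<noteq> 0 \<longrightarrow> \<tau> x x < 0)}"
  assume "\<nexists>x. \<tau> x x < 0"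
  then have "?N \<subseteq> {0}"
    by auto
  moreover have "0 \<in> ?N"
    by (rule CollectI, rule exI[of _ "{0}"]) simp
  ultimately have "?N = {0}"
    by blast
  then show False
    using assms by (simp add: neg_index_def)
qed

locale sym_bilinear_form =
  fixes \<tau> :: "'v::euclidean_space \<Rightarrow> 'v \<Rightarrow> real"
  assumes sym_bilinear: "sym_bilinear \<tau>"
begin

lemma bilinear: "bilinear \<tau>"
  and commute: "\<tau> x y = \<tau> y x"
  using sym_bilinear by (auto simp: sym_bilinear_def)

lemma linear_left: "linear (\<lambda>x. \<tau> x y)"
  using bilinear by (simp add: bilinear_def)

lemma linear_right: "linear (\<tau> x)"
  using bilinear by (simp add: bilinear_def)

lemma sum_left: "\<tau> (\<Sum>i\<in>S. f i) y = (\<Sum>i\<in>S. \<tau> (f i) y)"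
  using linear_sum[OF linear_left] .

lemma sum_right: "\<tau> y (\<Sum>i\<in>S. f i) = (\<Sum>i\<in>S. \<tau> y (f i))"
  using linear_sum[OF linear_right] .

lemma scale_left: "\<tau> (c *\<^sub>R x) y = c * \<tau> x y"
  and scale_right: "\<tau> y (c *\<^sub>R x) = c * \<tau> y x"
  and add_left: "\<tau> (x + z) y = \<tau> x y + \<tau> z y"
  and add_right: "\<tau> y (x + z) = \<tau> y x + \<tau> y z"
  and diff_left: "\<tau> (x - z) y = \<tau> x y - \<tau> z y"
  using bilinear by (simp_all add: bilinear_lmul bilinear_rmul bilinear_ladd bilinear_radd bilinear_lsub)

lemma subspace_kerf: "subspace (kerf \<tau>)"
  unfolding subspace_def kerf_def
  using bilinear by (simp add: bilinear_lzero add_left scale_left)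

lemma kerf_left: "x \<in> kerf \<tau> \<Longrightarrow> \<tau> x y = 0"
  and kerf_right: "x \<in> kerf \<tau> \<Longrightarrow> \<tau> y x = 0"
  by (auto simp: kerf_def commute)

lemma pseudo_orthonormal_lin_indep:
  assumes "pseudo_orthonormal \<tau> ts"
  shows "lin_indep_list ts"
  unfolding lin_indep_list_def
proof (intro allI impI)
  fix c j assume c: "(\<Sum>k<length ts. c k *\<^sub>R ts ! k) = 0" and j: "j < length ts"
  have "0 = \<tau> (\<Sum>k<length ts. c k *\<^sub>R ts ! k) (ts ! j)"
    using c bilinear by (simp add: bilinear_lzero)
  also have "\<dots> = (\<Sum>k<length ts. if k = j then c j * \<tau> (ts ! j) (ts ! j) else 0)"
    using assms j unfolding sum_left scale_left pseudo_orthonormal_def by (intro sum.cong) auto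
  also have "\<dots> = c j * \<tau> (ts ! j) (ts ! j)"
    using j by simp
  finally show "c j = 0"
    using assms j unfolding pseudo_orthonormal_def by auto
qed

lemma totally_isotropic_orthogonal:
  assumes "\<And>w. w \<in> W \<Longrightarrow> \<tau> w w = 0" "w \<in> W" "w' \<in> W" "w + w' \<in> W"
  shows "\<tau> w w' = 0"
proof -
  have "0 = \<tau> (w + w') (w + w')"
    using assms by simp
  also have "\<dots> = 2 * \<tau> w w'"
    using assms by (simp add: add_left add_right commute[of w' w])
  finally show ?thesis
    by simp
qed

definition pseudo_orthogonal_proj :: "'v list \<Rightarrow> 'v \<Rightarrow> 'v" where
  "pseudo_orthogonal_proj ts v = (\<Sum>i<length ts. (\<tau> (ts ! i) (ts ! i) * \<tau> v (ts ! i)) *\<^sub>R ts ! i)"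

lemma pseudo_orthogonal_proj_in_span: "pseudo_orthogonal_proj ts v \<in> span (set ts)"
  unfolding pseudo_orthogonal_proj_def by (intro span_sum span_scale span_base) auto

lemma pseudo_orthogonal_proj_residual:
  assumes ts: "pseudo_orthonormal \<tau> ts" and t: "t \<in> set ts"
  shows "\<tau> (v - pseudo_orthogonal_proj ts v) t = 0"
proof -
  obtain j where j: "j < length ts" "t = ts ! j"
    using t by (auto simp: in_set_conv_nth)
  have "\<tau> (ts ! j) (ts ! j) * \<tau> (ts ! j) (ts ! j) = 1"
    using ts j abs_mult_self_eq[of "\<tau> (ts ! j) (ts ! j)"] unfolding pseudo_orthonormal_def by simp
  then have "(\<Sum>i<length ts. \<tau> (ts ! i) (ts ! i) * \<tau> v (ts ! i) * \<tau> (ts ! i) (ts ! j))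
      = (\<Sum>i<length ts. if i = j then \<tau> v (ts ! j) else 0)"
    using ts j unfolding pseudo_orthonormal_def by (intro sum.cong) auto
  then show ?thesis
    using j by (simp add: pseudo_orthogonal_proj_def diff_left sum_left scale_left)
qed

lemma isotropic_orthogonal_complement_in_kerf:
  assumes ts: "pseudo_orthonormal \<tau> ts"
    and iso: "\<And>w. \<forall>t\<in>set ts. \<tau> w t = 0 \<Longrightarrow> \<tau> w w = 0"
    and w: "\<forall>t\<in>set ts. \<tau> w t = 0"
  shows "w \<in> kerf \<tau>"
proof -
  let ?W = "{w. \<forall>t\<in>set ts. \<tau> w t = 0}"
  have "\<tau> w v = 0" for v
  proof -
    let ?r = "pseudo_orthogonal_proj ts v"
    have residual: "v - ?r \<in> ?W"
      using pseudo_orthogonal_proj_residual[OF ts] by simp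
    then have "\<tau> w (v - ?r) = 0"
      using totally_isotropic_orthogonal[of ?W w "v - ?r"] iso w by (simp add: add_left)
    moreover have "\<tau> w ?r = 0"
      using w by (auto simp: pseudo_orthogonal_proj_def sum_right scale_right commute[of w])
    ultimately show ?thesis
      using add_right[of w "v - ?r" ?r] by simp
  qed
  then show ?thesis
    by (simp add: kerf_def)
qed

lemma ex_orthogonal_nonisotropic:
  assumes ts: "pseudo_orthonormal \<tau> ts" and dim: "dim (kerf \<tau>) + length ts < DIM('v)"
  obtains w where "\<forall>t\<in>set ts. \<tau> w t = 0" "\<tau> w w \<noteq> 0"
proof (cases "\<exists>w. (\<forall>t\<in>set ts. \<tau> w t = 0) \<and> \<tau> w w \<noteq> 0")
  case True
  then show thesis
    using that by blast
next
  case False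
  have "v \<in> span (kerf \<tau> \<union> set ts)" for v
  proof -
    let ?r = "pseudo_orthogonal_proj ts v"
    have "v - ?r \<in> kerf \<tau>"
      using isotropic_orthogonal_complement_in_kerf[OF ts] False pseudo_orthogonal_proj_residual[OF ts]
      by blast
    then have "v - ?r \<in> span (kerf \<tau> \<union> set ts)"
      by (intro span_base) blast
    moreover have "?r \<in> span (kerf \<tau> \<union> set ts)"
      using pseudo_orthogonal_proj_in_span span_mono[of "set ts" "kerf \<tau> \<union> set ts"] by blast
    ultimately show ?thesis
      using span_add[of "v - ?r" _ ?r] by simp
  qed
  then have "dim (UNIV :: 'v set) \<le> dim (span (kerf \<tau> \<union> set ts))"
    by (intro dim_subset) blast
  then have "DIM('v) \<le> dim (kerf \<tau> \<union> set ts)"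
    by (simp add: dim_span)
  then show thesis
    using dim_Un_set_le[of "kerf \<tau>" ts] dim by simp
qed

lemma ex_pseudo_orthonormal_extension:
  assumes x0: "\<bar>\<tau> x0 x0\<bar> = 1" and n: "dim (kerf \<tau>) + Suc n \<le> DIM('v)"
  shows "\<exists>ts. length ts = n \<and> pseudo_orthonormal \<tau> (x0 # ts)"
  using n
proof (induction n)
  case 0
  then show ?case
    using x0 by (auto simp: pseudo_orthonormal_def)
next
  case (Suc n)
  then obtain ts where ts: "length ts = n" "pseudo_orthonormal \<tau> (x0 # ts)"
    by auto
  obtain w where w: "\<forall>t\<in>set (x0 # ts). \<tau> w t = 0" "\<tau> w w \<noteq> 0"
    using ex_orthogonal_nonisotropic[OF ts(2)] ts(1) Suc.prems by auto
  define t where "t = (1 / sqrt \<bar>\<tau> w w\<bar>) *\<^sub>R w"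
  have "\<tau> s w = 0" if "s \<in> set (x0 # ts)" for s
    using w(1) that commute[of s w] by auto
  then have "\<forall>s\<in>set (x0 # ts). \<tau> s t = 0 \<and> \<tau> t s = 0"
    using w(1) by (simp add: t_def scale_left scale_right)
  moreover have "\<tau> t t = \<tau> w w / \<bar>\<tau> w w\<bar>"
    by (simp add: t_def scale_left scale_right)
  then have "\<bar>\<tau> t t\<bar> = 1"
    using w(2) by simp
  ultimately have "pseudo_orthonormal \<tau> ((x0 # ts) @ [t])"
    by (rule pseudo_orthonormal_snoc[OF ts(2)])
  then show ?case
    using ts(1) by (intro exI[of _ "ts @ [t]"]) simp
qed

lemma neg_index_ge_2:
  assumes "\<tau> a a = -1" "\<tau> b b = -1" "\<tau> a b = 0"
  shows "2 \<le> neg_index \<tau>"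
proof -
  have "pseudo_orthonormal \<tau> [a, b]"
    using assms commute[of b a] by (auto simp: pseudo_orthonormal_def less_Suc_eq)
  then have indep: "lin_indep_list [a, b]"
    by (rule pseudo_orthonormal_lin_indep)
  then have distinct: "distinct [a, b]"
    by (rule lin_indep_list_distinct)
  have "dim (span {a, b}) = card {a, b}"
    using dim_span_eq_card_independent lin_indep_list_independent[OF indep] by simp
  then have "dim (span {a, b}) = 2"
    using distinct by simp
  moreover have "\<tau> x x < 0" if x: "x \<in> span {a, b}" "x \<noteq> 0" for x
  proof -
    have "x \<in> span (set [a, b])"
      using x by simp
    then obtain c where "x = (\<Sum>k<length [a, b]. c k *\<^sub>R [a, b] ! k)"
      by (rule span_set_distinct_list[OF distinct])
    then have x_eq: "x = c 0 *\<^sub>R a + c 1 *\<^sub>R b"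
      by (simp add: numeral_2_eq_2)
    then have "\<tau> x x = - (c 0 * c 0 + c 1 * c 1)"
      using assms commute[of b a] by (simp add: add_left add_right scale_left scale_right algebra_simps)
    moreover have "c 0 \<noteq> 0 \<or> c 1 \<noteq> 0"
      using x_eq x(2) by auto
    then have "0 < c 0 * c 0 + c 1 * c 1"
      by (simp only: sum_squares_gt_zero_iff)
    ultimately show ?thesis
      by linarith
  qed
  ultimately show ?thesis
    using neg_index_ge[of "span {a, b}" \<tau>] by simp
qed


lemma ex_eta_orthonormal:
  assumes neg_index: "neg_index \<tau> = 1" and dim: "dim (kerf \<tau>) + Suc p \<le> DIM('v)"
  shows "\<exists>Ts. length Ts = p+1 \<and> (\<forall>A<p+1. \<forall>B<p+1. \<tau> (Ts ! A) (Ts ! B) = eta A B)"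
proof -
  obtain x where x: "\<tau> x x < 0"
    using ex_timelike_if_neg_index_pos[of \<tau>] neg_index by auto
  define x0 where "x0 = (1 / sqrt (- \<tau> x x)) *\<^sub>R x"
  have x0: "\<tau> x0 x0 = -1"
    using x by (simp add: x0_def scale_left scale_right)
  obtain ts where ts: "length ts = p" "pseudo_orthonormal \<tau> (x0 # ts)"
    using ex_pseudo_orthonormal_extension[of x0 p] x0 dim by auto
  define Ts where "Ts = x0 # ts"
  have Ts: "length Ts = p+1" "pseudo_orthonormal \<tau> Ts" "Ts ! 0 = x0"
    using ts by (simp_all add: Ts_def)
  have orth: "\<tau> (Ts ! A) (Ts ! B) = 0" if "A < p+1" "B < p+1" "A \<noteq> B" for A B
    using Ts(1,2) that unfolding pseudo_orthonormal_def by simp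
  have spacelike: "\<tau> (Ts ! A) (Ts ! A) = 1" if A: "A < p+1" "A \<noteq> 0" for A
  proof -
    have "\<tau> (Ts ! A) (Ts ! A) \<noteq> -1"
    proof
      assume "\<tau> (Ts ! A) (Ts ! A) = -1"
      moreover have "\<tau> x0 (Ts ! A) = 0"
        using orth[of 0 A] A Ts(3) by simp
      ultimately have "2 \<le> neg_index \<tau>"
        by (rule neg_index_ge_2[OF x0])
      then show False
        using neg_index by simp
    qed
    moreover have "\<bar>\<tau> (Ts ! A) (Ts ! A)\<bar> = 1"
      using Ts(1,2) A(1) unfolding pseudo_orthonormal_def by simp
    ultimately show ?thesis
      by (auto simp: abs_if split: if_splits)
  qed
  have "\<tau> (Ts ! A) (Ts ! B) = eta A B" if "A < p+1" "B < p+1" for A B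
    using orth[OF that] spacelike[OF that(1)] Ts(3) x0 by (cases "A = B") (auto simp: eta_def)
  then show ?thesis
    using Ts(1) by blast
qed

end

section \<open>Positive definite metrics on a subspace\<close>

definition orthonormal_list :: "('v \<Rightarrow> 'v \<Rightarrow> real) \<Rightarrow> 'v list \<Rightarrow> bool" where
  "orthonormal_list \<gamma> es \<longleftrightarrow>
    (\<forall>i<length es. \<forall>j<length es. \<gamma> (es ! i) (es ! j) = (if i = j then 1 else 0))"

lemma orthonormal_list_snoc:
  assumes "orthonormal_list \<gamma> es" "\<forall>x\<in>set es. \<gamma> x e = 0 \<and> \<gamma> e x = 0" "\<gamma> e e = 1"
  shows "orthonormal_list \<gamma> (es @ [e])"
  using assms unfolding orthonormal_list_def
  by (auto simp: nth_append less_Suc_eq)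

locale subspace_metric =
  fixes K :: "'v::euclidean_space set" and \<gamma> :: "'v \<Rightarrow> 'v \<Rightarrow> real"
  assumes subspace: "subspace K" and pos_def: "pos_def_metric_on K \<gamma>"
begin

lemma commute: "x \<in> K \<Longrightarrow> y \<in> K \<Longrightarrow> \<gamma> x y = \<gamma> y x"
  and positive: "x \<in> K \<Longrightarrow> x \<noteq> 0 \<Longrightarrow> 0 < \<gamma> x x"
  and lincomb_left: "x \<in> K \<Longrightarrow> y \<in> K \<Longrightarrow> z \<in> K \<Longrightarrow> \<gamma> (a *\<^sub>R x + b *\<^sub>R y) z = a * \<gamma> x z + b * \<gamma> y z"
  using pos_def unfolding pos_def_metric_on_def by blast+

lemma scale_left: "x \<in> K \<Longrightarrow> z \<in> K \<Longrightarrow> \<gamma> (a *\<^sub>R x) z = a * \<gamma> x z"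
  using lincomb_left[of x x z a 0] by simp

lemma diff_left: "x \<in> K \<Longrightarrow> y \<in> K \<Longrightarrow> z \<in> K \<Longrightarrow> \<gamma> (x - y) z = \<gamma> x z - \<gamma> y z"
  using lincomb_left[of x y z 1 "-1"] by simp

lemma sum_left:
  "finite S \<Longrightarrow> (\<And>i. i \<in> S \<Longrightarrow> f i \<in> K) \<Longrightarrow> z \<in> K \<Longrightarrow> \<gamma> (\<Sum>i\<in>S. f i) z = (\<Sum>i\<in>S. \<gamma> (f i) z)"
proof (induction S rule: finite_induct)
  case empty
  then show ?case
    using scale_left[of z z 0] by simp
next
  case (insert x F)
  then have "\<gamma> (f x + sum f F) z = \<gamma> (f x) z + \<gamma> (sum f F) z"
    using lincomb_left[of "f x" "sum f F" z 1 1] subspace_sum[OF subspace, of F f] by simp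
  then show ?case
    using insert by simp
qed

lemma lincomb_in: "set es \<subseteq> K \<Longrightarrow> (\<Sum>i<length es. a i *\<^sub>R es ! i) \<in> K"
  by (intro subspace_sum[OF subspace] subspace_scale[OF subspace]) auto

lemma orthonormal_lincomb_nth:
  assumes "set es \<subseteq> K" "orthonormal_list \<gamma> es" "j < length es"
  shows "\<gamma> (\<Sum>i<length es. a i *\<^sub>R es ! i) (es ! j) = a j"
proof -
  have "\<gamma> (\<Sum>i<length es. a i *\<^sub>R es ! i) (es ! j) = (\<Sum>i<length es. a i * \<gamma> (es ! i) (es ! j))"
    using assms by (subst sum_left) (auto intro!: sum.cong scale_left subspace_scale[OF subspace])
  also have "\<dots> = (\<Sum>i<length es. if i = j then a j else 0)"
    using assms(2,3) unfolding orthonormal_list_def by (intro sum.cong) auto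
  finally show ?thesis
    using assms(3) by simp
qed

lemma orthonormal_lincomb_lincomb:
  assumes "set es \<subseteq> K" "orthonormal_list \<gamma> es"
  shows "\<gamma> (\<Sum>i<length es. a i *\<^sub>R es ! i) (\<Sum>i<length es. b i *\<^sub>R es ! i) = (\<Sum>i<length es. a i * b i)"
proof -
  let ?x = "\<Sum>i<length es. a i *\<^sub>R es ! i"
  have "\<gamma> ?x (\<Sum>i<length es. b i *\<^sub>R es ! i) = \<gamma> (\<Sum>i<length es. b i *\<^sub>R es ! i) ?x"
    using assms by (intro commute lincomb_in)
  also have "\<dots> = (\<Sum>i<length es. b i * \<gamma> (es ! i) ?x)"
    using assms lincomb_in by (subst sum_left) (auto intro!: sum.cong scale_left subspace_scale[OF subspace])
  also have "\<dots> = (\<Sum>i<length es. a i * b i)"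
    using assms lincomb_in orthonormal_lincomb_nth commute
    by (intro sum.cong) (auto simp: subset_iff)
  finally show ?thesis .
qed

lemma orthonormal_list_extend:
  assumes es: "set es \<subseteq> K" "orthonormal_list \<gamma> es" and x: "x \<in> K" "x \<notin> span (set es)"
  obtains e where "e \<in> K" "orthonormal_list \<gamma> (es @ [e])"
proof -
  define y where "y = x - (\<Sum>i<length es. \<gamma> x (es ! i) *\<^sub>R es ! i)"
  have y: "y \<in> K" "y \<noteq> 0"
    using x span_sum[of "{..<length es}" "\<lambda>i. \<gamma> x (es ! i) *\<^sub>R es ! i" "set es"]
    by (auto simp: y_def span_base span_scale subspace_diff[OF subspace] lincomb_in[OF es(1)])
  have y_orth: "\<gamma> y (es ! j) = 0" if "j < length es" for j
    using orthonormal_lincomb_nth[OF es that, of "\<lambda>i. \<gamma> x (es ! i)"]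
      that es(1) x(1) lincomb_in[OF es(1)]
    by (simp add: y_def diff_left subset_iff)
  define e where "e = (1 / sqrt (\<gamma> y y)) *\<^sub>R y"
  have e: "e \<in> K"
    using y(1) by (simp add: e_def subspace_scale[OF subspace])
  have "\<gamma> e e = 1"
    using positive[OF y] y(1) e commute[OF y(1) e] by (simp add: e_def scale_left)
  moreover have "\<gamma> e z = 0" "\<gamma> z e = 0" if z_in: "z \<in> set es" for z
  proof -
    have z: "z \<in> K"
      using z_in es(1) by auto
    obtain j where "j < length es" "z = es ! j"
      using z_in by (auto simp: in_set_conv_nth)
    then show "\<gamma> e z = 0"
      using scale_left[OF y(1) z] y_orth by (simp add: e_def)
    then show "\<gamma> z e = 0"
      using commute[OF z e] by simp
  qed
  ultimately have "orthonormal_list \<gamma> (es @ [e])"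
    by (intro orthonormal_list_snoc[OF es(2)]) auto
  then show thesis
    using e that by blast
qed

lemma ex_orthonormal_list:
  "n \<le> dim K \<Longrightarrow> \<exists>es. length es = n \<and> set es \<subseteq> K \<and> orthonormal_list \<gamma> es"
proof (induction n)
  case 0
  then show ?case
    by (simp add: orthonormal_list_def)
next
  case (Suc n)
  then obtain es where es: "length es = n" "set es \<subseteq> K" "orthonormal_list \<gamma> es"
    by auto
  have "\<not> K \<subseteq> span (set es)"
  proof
    assume "K \<subseteq> span (set es)"
    then have "dim K \<le> card (set es)"
      by (simp add: dim_le_card)
    also have "\<dots> \<le> n"
      using es(1) card_length by blast
    finally show False
      using Suc.prems by simp
  qed
  then obtain x where "x \<in> K" "x \<notin> span (set es)"
    by auto
  then obtain e where "e \<in> K" "orthonormal_list \<gamma> (es @ [e])"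
    using orthonormal_list_extend[OF es(2,3)] by blast
  then show ?case
    using es by (intro exI[of _ "es @ [e]"]) simp
qed

end

section \<open>Adapted frames\<close>

locale adapted_frames = sym_bilinear_form \<tau> for \<tau> :: "'v::euclidean_space \<Rightarrow> 'v \<Rightarrow> real" +
  fixes \<gamma> :: "'v \<Rightarrow> 'v \<Rightarrow> real" and p :: nat
  assumes metric: "pos_def_metric_on (kerf \<tau>) \<gamma>"
    and rank: "form_rank \<tau> = p + 1"
begin

sublocale K: subspace_metric "kerf \<tau>" \<gamma>
  using subspace_kerf metric by unfold_locales

lemma dim_kerf: "dim (kerf \<tau>) + (p + 1) = DIM('v)"
  using rank dim_subset_UNIV[of "kerf \<tau>"] unfolding form_rank_def by simp

definition adapted :: "'v list \<Rightarrow> 'v list \<Rightarrow> bool" where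
  "adapted Ts Es \<longleftrightarrow> length Ts = p + 1 \<and> length Es = DIM('v) - (p + 1) \<and>
     (\<forall>A<p+1. \<forall>B<p+1. \<tau> (Ts ! A) (Ts ! B) = eta A B) \<and>
     set Es \<subseteq> kerf \<tau> \<and> orthonormal_list \<gamma> Es"

lemma adapted_length:
  assumes "adapted Ts Es"
  shows "length Ts = p + 1" "length Es = DIM('v) - (p + 1)" "length (Ts @ Es) = DIM('v)"
  using assms dim_kerf unfolding adapted_def by auto

lemma tau_adapted_nth:
  assumes "adapted Ts Es" "m < DIM('v)" "C < p+1"
  shows "\<tau> ((Ts @ Es) ! m) ((Ts @ Es) ! C) = (if m = C then eta C C else 0)"
proof (cases "m < p+1")
  case True
  then show ?thesis
    using assms unfolding adapted_def by (auto simp: nth_append eta_def)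
next
  case False
  then have "(Ts @ Es) ! m \<in> kerf \<tau>"
    using assms unfolding adapted_def by (auto simp: nth_append)
  then show ?thesis
    using False assms(3) by (simp add: kerf_left)
qed

lemma tau_lincomb_adapted_nth:
  assumes "adapted Ts Es" "C < p+1"
  shows "\<tau> (\<Sum>m<DIM('v). c m *\<^sub>R (Ts @ Es) ! m) ((Ts @ Es) ! C) = c C * eta C C"
proof -
  have "\<tau> (\<Sum>m<DIM('v). c m *\<^sub>R (Ts @ Es) ! m) ((Ts @ Es) ! C)
      = (\<Sum>m<DIM('v). if m = C then c C * eta C C else 0)"
    unfolding sum_left scale_left using tau_adapted_nth[OF assms(1) _ assms(2)] by (intro sum.cong) auto
  then show ?thesis
    using assms(2) dim_kerf by simp
qed

lemma tau_lincomb_adapted: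
  assumes "adapted Ts Es"
  shows "\<tau> (\<Sum>m<DIM('v). a m *\<^sub>R (Ts @ Es) ! m) (\<Sum>m<DIM('v). b m *\<^sub>R (Ts @ Es) ! m)
    = (\<Sum>A<p+1. a A * b A * eta A A)"
proof -
  let ?x = "\<Sum>m<DIM('v). a m *\<^sub>R (Ts @ Es) ! m"
  have "\<tau> ?x (\<Sum>m<DIM('v). b m *\<^sub>R (Ts @ Es) ! m) = (\<Sum>m<DIM('v). b m * \<tau> ((Ts @ Es) ! m) ?x)"
    by (simp add: sum_right scale_right commute[of ?x])
  also have "\<dots> = (\<Sum>m<(p+1) + (DIM('v) - (p+1)). if m < p+1 then a m * b m * eta m m else 0)"
  proof (rule sum.cong)
    fix m assume m: "m \<in> {..<(p+1) + (DIM('v) - (p+1))}"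
    show "b m * \<tau> ((Ts @ Es) ! m) ?x = (if m < p+1 then a m * b m * eta m m else 0)"
    proof (cases "m < p+1")
      case True
      then show ?thesis
        using tau_lincomb_adapted_nth[OF assms True] commute[of _ ?x] by simp
    next
      case False
      then have "(Ts @ Es) ! m \<in> kerf \<tau>"
        using assms m by (auto simp: adapted_def nth_append)
      then show ?thesis
        using False by (simp add: kerf_left)
    qed
  qed (use dim_kerf in simp)
  also have "\<dots> = (\<Sum>A<p+1. a A * b A * eta A A)"
    by (simp only: sum_lessThan_add) simp
  finally show ?thesis .
qed

lemma adapted_lin_indep:
  assumes adapted: "adapted Ts Es"
  shows "lin_indep_list (Ts @ Es)"
  unfolding lin_indep_list_def
proof (intro allI impI)
  fix c k assume c: "(\<Sum>k<length (Ts @ Es). c k *\<^sub>R (Ts @ Es) ! k) = 0" and k: "k < length (Ts @ Es)"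
  note len = adapted_length[OF adapted]
  have top: "c C = 0" if "C < p+1" for C
  proof -
    have "c C * eta C C = 0"
      using tau_lincomb_adapted_nth[OF adapted that, of c] c[unfolded len(3)] bilinear
      by (simp add: bilinear_lzero)
    then show ?thesis
      by (simp add: eta_def split: if_splits)
  qed
  have "(\<Sum>k<length (Ts @ Es). c k *\<^sub>R (Ts @ Es) ! k) = (\<Sum>i<length Es. c (p+1+i) *\<^sub>R Es ! i)"
    by (simp only: length_append len(1) sum_lessThan_add) (simp add: top len(1) nth_append)
  then have "(\<Sum>i<length Es. c (p+1+i) *\<^sub>R Es ! i) = 0"
    using c by simp
  then have "c (p+1+j) = 0" if "j < length Es" for j
    using K.orthonormal_lincomb_nth[of Es j "\<lambda>i. c (p+1+i)"] K.scale_left[of 0 "Es ! j" 0]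
      subspace_0[OF subspace_kerf] adapted that unfolding adapted_def by (auto simp: subset_iff)
  then show "c k = 0"
    using top[of k] k len(1) by (cases "k < p+1") (auto dest: meta_spec[of _ "k - (p+1)"])
qed

lemma frames_p_iff_adapted: "(Ts, Es) \<in> frames_p p \<tau> \<gamma> \<longleftrightarrow> adapted Ts Es"
proof
  assume "(Ts, Es) \<in> frames_p p \<tau> \<gamma>"
  then show "adapted Ts Es"
    unfolding frames_p_def adapted_def orthonormal_list_def by (auto simp: in_set_conv_nth)
next
  assume adapted: "adapted Ts Es"
  note indep = adapted_lin_indep[OF adapted]
  show "(Ts, Es) \<in> frames_p p \<tau> \<gamma>"
    using adapted lin_indep_list_distinct[OF indep] lin_indep_list_independent[OF indep]
      lin_indep_list_span_UNIV[OF indep adapted_length(3)[OF adapted]]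
    unfolding frames_p_def adapted_def orthonormal_list_def by auto
qed

lemma block_lower_triangular_if_kerf:
  assumes adapted: "adapted Ts Es"
    and kerf: "set (drop (p+1) (frame_mult (Ts @ Es) g)) \<subseteq> kerf \<tau>"
  shows "block_lower_triangular DIM('v) p g"
  unfolding block_lower_triangular_def
proof (intro allI impI)
  fix A j assume A: "A < p+1" and j: "j < DIM('v) - (p+1)"
  note len = adapted_length[OF adapted]
  have "drop (p+1) (frame_mult (Ts @ Es) g) ! j \<in> kerf \<tau>"
    using kerf nth_mem[of j "drop (p+1) (frame_mult (Ts @ Es) g)"] j len by auto
  then have "frame_mult (Ts @ Es) g ! (p+1+j) \<in> kerf \<tau>"
    using j len by (simp del: nth_frame_mult)
  then have "0 = \<tau> (frame_mult (Ts @ Es) g ! (p+1+j)) ((Ts @ Es) ! A)"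
    by (simp add: kerf_left)
  also have "\<dots> = g $$ (A, p+1+j) * eta A A"
    using tau_lincomb_adapted_nth[OF adapted A] j len by simp
  finally show "g $$ (A, p+1+j) = 0"
    by (simp add: eta_def split: if_splits)
qed

lemma adapted_frame_mult_iff:
  assumes adapted: "adapted Ts Es" and g: "g \<in> carrier_mat DIM('v) DIM('v)"
    and lower: "block_lower_triangular DIM('v) p g"
  shows "adapted (take (p+1) (frame_mult (Ts @ Es) g)) (drop (p+1) (frame_mult (Ts @ Es) g))
    \<longleftrightarrow> g \<in> Gp DIM('v) p"
proof -
  let ?ys = "frame_mult (Ts @ Es) g"
  note len = adapted_length[OF adapted]
  have Es: "set Es \<subseteq> kerf \<tau>" "orthonormal_list \<gamma> Es"
    using adapted by (simp_all add: adapted_def)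
  have lower': "block_lower_triangular (length (Ts @ Es)) p g"
    using lower len by simp
  have ys_lower: "?ys ! (p+1+j) = (\<Sum>i<length Es. g $$ (p+1+i, p+1+j) *\<^sub>R Es ! i)"
    if "j < length Es" for j
    by (rule nth_frame_mult_lower[OF len(1) lower' that])
  have "(\<forall>A<p+1. \<forall>B<p+1. \<tau> (take (p+1) ?ys ! A) (take (p+1) ?ys ! B) = eta A B)
      \<longleftrightarrow> (\<forall>B<p+1. \<forall>C<p+1. (\<Sum>A<p+1. g $$ (A, B) * g $$ (A, C) * eta A A) = eta B C)"
    using tau_lincomb_adapted[OF adapted] len dim_kerf by simp
  moreover have "orthonormal_list \<gamma> (drop (p+1) ?ys)
      \<longleftrightarrow> (\<forall>j<DIM('v)-(p+1). \<forall>l<DIM('v)-(p+1).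
            (\<Sum>i<DIM('v)-(p+1). g $$ (p+1+i, p+1+j) * g $$ (p+1+i, p+1+l)) = (if j = l then 1 else 0))"
    using ys_lower K.orthonormal_lincomb_lincomb[OF Es] len
    by (simp add: orthonormal_list_def add.assoc)
  moreover have "set (drop (p+1) ?ys) \<subseteq> kerf \<tau>"
    using ys_lower K.lincomb_in[OF Es(1)] len by (auto simp: in_set_conv_nth add.assoc)
  ultimately show ?thesis
    using len dim_kerf g lower by (simp add: adapted_def mem_Gp_iff)
qed

lemma frame_act_eq_take_drop_Gp:
  assumes "adapted Ts Es" "g \<in> Gp DIM('v) p"
  shows "frame_act p (Ts, Es) g
    = (take (p+1) (frame_mult (Ts @ Es) g), drop (p+1) (frame_mult (Ts @ Es) g))"
proof -
  have "block_lower_triangular (length (Ts @ Es)) p g"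
    using assms adapted_length(3)[OF assms(1)] by (simp add: mem_Gp_iff)
  then show ?thesis
    by (rule frame_act_eq_take_drop[OF adapted_length(1)[OF assms(1)]])
qed

lemma frame_act_closed:
  assumes F: "F \<in> frames_p p \<tau> \<gamma>" and g: "g \<in> Gp DIM('v) p"
  shows "frame_act p F g \<in> frames_p p \<tau> \<gamma>"
proof -
  obtain Ts Es where F_eq: "F = (Ts, Es)"
    by (cases F)
  then have adapted: "adapted Ts Es"
    using F frames_p_iff_adapted by simp
  have "g \<in> carrier_mat DIM('v) DIM('v)" "block_lower_triangular DIM('v) p g"
    using g by (simp_all add: mem_Gp_iff)
  then show ?thesis
    using adapted_frame_mult_iff[OF adapted] g frame_act_eq_take_drop_Gp[OF adapted g]
    by (simp add: F_eq frames_p_iff_adapted)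
qed

lemma frame_act_one:
  assumes F: "F \<in> frames_p p \<tau> \<gamma>"
  shows "frame_act p F (1\<^sub>m DIM('v)) = F"
proof -
  obtain Ts Es where F_eq: "F = (Ts, Es)"
    by (cases F)
  then have len: "length Ts = p+1" "length (Ts @ Es) = DIM('v)"
    using F frames_p_iff_adapted adapted_length by simp_all
  have "frame_act p (Ts, Es) (1\<^sub>m (length (Ts @ Es)))
      = (take (p+1) (Ts @ Es), drop (p+1) (Ts @ Es))"
    using frame_act_eq_take_drop[OF len(1) block_lower_triangular_one] by (simp only: frame_mult_one)
  moreover have "take (p+1) (Ts @ Es) = Ts" "drop (p+1) (Ts @ Es) = Es"
    using len(1) by simp_all
  ultimately show ?thesis
    unfolding F_eq by (simp only: len(2))
qed

lemma frame_act_mult: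
  assumes F: "F \<in> frames_p p \<tau> \<gamma>" and g: "g \<in> Gp DIM('v) p" and h: "h \<in> Gp DIM('v) p"
  shows "frame_act p (frame_act p F g) h = frame_act p F (g * h)"
proof -
  obtain Ts Es where F_eq: "F = (Ts, Es)"
    by (cases F)
  then have adapted: "adapted Ts Es"
    using F frames_p_iff_adapted by simp
  note len = adapted_length[OF adapted]
  define ys where "ys = frame_mult (Ts @ Es) g"
  have Fg: "frame_act p F g = (take (p+1) ys, drop (p+1) ys)"
    using frame_act_eq_take_drop_Gp[OF adapted g] by (simp add: F_eq ys_def)
  then have adapted': "adapted (take (p+1) ys) (drop (p+1) ys)"
    using frame_act_closed[OF F g] frames_p_iff_adapted by simp
  have carrier: "g \<in> carrier_mat DIM('v) DIM('v)" "h \<in> carrier_mat DIM('v) DIM('v)"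
    and lower: "block_lower_triangular DIM('v) p g" "block_lower_triangular DIM('v) p h"
    using g h by (simp_all add: mem_Gp_iff)
  have "frame_act p (frame_act p F g) h
      = (take (p+1) (frame_mult ys h), drop (p+1) (frame_mult ys h))"
    using frame_act_eq_take_drop_Gp[OF adapted' h] by (simp add: Fg)
  also have "frame_mult ys h = frame_mult (Ts @ Es) (g * h)"
    unfolding ys_def by (rule frame_mult_mult[OF carrier len(3)])
  also have "(take (p+1) (frame_mult (Ts @ Es) (g * h)), drop (p+1) (frame_mult (Ts @ Es) (g * h)))
      = frame_act p F (g * h)"
    using frame_act_eq_take_drop[OF len(1)] block_lower_triangular_mult[OF carrier lower] len(3)
    by (simp add: F_eq)
  finally show ?thesis .
qed

lemma frame_act_free:
  assumes F: "F \<in> frames_p p \<tau> \<gamma>" and g: "g \<in> Gp DIM('v) p" and fixed: "frame_act p F g = F"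
  shows "g = 1\<^sub>m DIM('v)"
proof -
  obtain Ts Es where F_eq: "F = (Ts, Es)"
    by (cases F)
  then have adapted: "adapted Ts Es"
    using F frames_p_iff_adapted by simp
  note len = adapted_length[OF adapted]
  have "take (p+1) (frame_mult (Ts @ Es) g) = Ts" "drop (p+1) (frame_mult (Ts @ Es) g) = Es"
    using fixed frame_act_eq_take_drop_Gp[OF adapted g] by (simp_all add: F_eq)
  then have "frame_mult (Ts @ Es) g = Ts @ Es"
    by (metis append_take_drop_id)
  moreover have "g \<in> carrier_mat (length (Ts @ Es)) (length (Ts @ Es))"
    using g len(3) by (simp add: mem_Gp_iff)
  ultimately show ?thesis
    using frame_mult_eq_self_imp_one[OF adapted_lin_indep[OF adapted]] len(3) by simp
qed

lemma frame_act_transitive: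
  assumes F: "F \<in> frames_p p \<tau> \<gamma>" and F': "F' \<in> frames_p p \<tau> \<gamma>"
  shows "\<exists>g\<in>Gp DIM('v) p. frame_act p F g = F'"
proof -
  obtain Ts Es Ts' Es' where F_eq: "F = (Ts, Es)" and F'_eq: "F' = (Ts', Es')"
    by (cases F, cases F')
  have adapted: "adapted Ts Es" and adapted': "adapted Ts' Es'"
    using F F' F_eq F'_eq frames_p_iff_adapted by simp_all
  note len = adapted_length[OF adapted] and len' = adapted_length[OF adapted']
  have "distinct (Ts @ Es)" "span (set (Ts @ Es)) = UNIV"
    using F F_eq unfolding frames_p_def by simp_all
  then obtain g where g: "g \<in> carrier_mat DIM('v) DIM('v)" "frame_mult (Ts @ Es) g = Ts' @ Es'"
    using frame_mult_surj[of "Ts @ Es" "Ts' @ Es'"] len(3) len'(3) by metis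
  then have split: "take (p+1) (frame_mult (Ts @ Es) g) = Ts'" "drop (p+1) (frame_mult (Ts @ Es) g) = Es'"
    using len'(1) by simp_all
  then have "block_lower_triangular DIM('v) p g"
    using block_lower_triangular_if_kerf[OF adapted] adapted' by (simp add: adapted_def)
  then have "g \<in> Gp DIM('v) p"
    using adapted_frame_mult_iff[OF adapted g(1)] adapted' split by simp
  moreover have "frame_act p F g = F'"
    using frame_act_eq_take_drop_Gp[OF adapted \<open>g \<in> Gp DIM('v) p\<close>] split F_eq F'_eq by simp
  ultimately show ?thesis
    by blast
qed

lemma frames_p_nonempty:
  assumes "lorentzian_sig \<tau> p"
  shows "frames_p p \<tau> \<gamma> \<noteq> {}"
proof -
  obtain Ts where "length Ts = p+1" "\<forall>A<p+1. \<forall>B<p+1. \<tau> (Ts ! A) (Ts ! B) = eta A B"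
    using ex_eta_orthonormal[of p] assms dim_kerf by (auto simp: lorentzian_sig_def)
  moreover obtain Es where "length Es = dim (kerf \<tau>)" "set Es \<subseteq> kerf \<tau>" "orthonormal_list \<gamma> Es"
    using K.ex_orthonormal_list by blast
  ultimately have "adapted Ts Es"
    using dim_kerf by (simp add: adapted_def)
  then show ?thesis
    using frames_p_iff_adapted by blast
qed

end

theorem proposition1:
  fixes \<tau> \<gamma> :: "'v::euclidean_space \<Rightarrow> 'v \<Rightarrow> real" and p :: nat
  defines "d \<equiv> DIM('v)"
  assumes "sym_bilinear \<tau>"
      and "form_rank \<tau> = p + 1"
      and "lorentzian_sig \<tau> p"
      and "pos_def_metric_on (kerf \<tau>) \<gamma>"
  shows "frames_p p \<tau> \<gamma> \<noteq> {}
     \<and> (\<forall>F\<in>frames_p p \<tau> \<gamma>. \<forall>g\<in>Gp d p. frame_act p F g \<in> frames_p p \<tau> \<gamma>)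
     \<and> (\<forall>F\<in>frames_p p \<tau> \<gamma>. frame_act p F (1\<^sub>m d) = F)
     \<and> (\<forall>F\<in>frames_p p \<tau> \<gamma>. \<forall>g\<in>Gp d p. \<forall>h\<in>Gp d p.
           frame_act p (frame_act p F g) h = frame_act p F (g * h))
     \<and> (\<forall>F\<in>frames_p p \<tau> \<gamma>. \<forall>g\<in>Gp d p. frame_act p F g = F \<longrightarrow> g = 1\<^sub>m d)
     \<and> (\<forall>F\<in>frames_p p \<tau> \<gamma>. \<forall>F'\<in>frames_p p \<tau> \<gamma>. \<exists>g\<in>Gp d p. frame_act p F g = F')"
proof -
  interpret adapted_frames \<tau> \<gamma> p
    using assms by unfold_locales
  show ?thesis
    unfolding d_def
    using frames_p_nonempty[OF assms(4)] frame_act_closed frame_act_one frame_act_mult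
      frame_act_free frame_act_transitive
    by blast
qed

end
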